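(* Let $R>1$, $C>0$, let $B\subset\mathbb R^m$ be compact, let $\Gamma:=\{x\in\mathbb R: x\ge R-1\}$, and let $h\colon B\times\Gamma\to\mathbb R$ be continuous with $\partial h/\partial x$ continuous, $|h|<C/2$ and $|\partial h/\partial x|<1/2$ on $B\times\Gamma$. Put $\Gamma_r:=\{x+ih(r,x): x\in\Gamma\}$. Fix $j\in\mathbb N$ with $j\ge R$, $j\ge C$, and $b>j+3+\frac{3C}{2}$. Let $S_j:=\{se^{i\theta}: s>0,\ |\theta|<\arcsin(C/j)\}$, $A_{j,b}:=\triangle_b\setminus\overline{S_j}$, $$\omega_1:=\{z=x+iy: j+1<x,\ |z|<b,\ |y|<C\},\qquad \omega_2:=\{x+iy: 0<x<j+2,\ |y|<C\}\cup A_{j,b}.$$ Let $\alpha\colon\bigcup_{r\in B}\{r\}\times\Gamma_r\to\mathbb C$ be continuous with $\alpha(r,\cdot)$ compactly supported on $\Gamma_r$ and $\operatorname{supp}\alpha(r,\cdot)\subset\{z=x+iy\in\Gamma_r: j+3+\frac{3C}{2}<x,\ |z|<b,\ |y|<C/2\}$ for all $r\in B$. Then for every $\epsilon>0$ there exist a family $\{H_t\}_{t>0}\subset\mathcal P(B,\mathbb C)$ and $t_0>0$ such that $\|\alpha(r,\cdot)-H_t(r,\cdot)\|_{\Gamma_r}<\epsilon$ for every $r\in B$ and $0<t<t_0$, and, for some $\delta>0$, $H_t\to0$ as $t\to0$ uniformly on $B\times(\omega_1\cap\omega_2)(\delta)$.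
   Context: $\triangle_s$ is the open disc of radius $s$ centred at $0$. For $D\subset\mathbb C$, $D(\delta):=\{z: d(z,D)<\delta\}$. $\mathcal P(B,\mathbb C):=\{f\in\mathscr C(B\times\mathbb C): f(r,\cdot)\text{ entire }\forall r\in B\}$. *)

theory Defs
  imports "HOL-Analysis.Analysis"
begin

definition P_class :: "'a::topological_space set \<Rightarrow> ('a \<Rightarrow> complex \<Rightarrow> complex) set" where
  "P_class B = {f. continuous_on (B \<times> UNIV) (\<lambda>(r, z). f r z) \<and> (\<forall>r\<in>B. f r holomorphic_on UNIV)}"

definition nbhd :: "complex set \<Rightarrow> real \<Rightarrow> complex set" where
  "nbhd D \<delta> = {z. infdist z D < \<delta>}"

definition graph_curve :: "('r \<Rightarrow> real \<Rightarrow> real) \<Rightarrow> real set \<Rightarrow> 'r \<Rightarrow> complex set" where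
  "graph_curve h \<Gamma> r = {Complex x (h r x) | x. x \<in> \<Gamma>}"

definition sector :: "real \<Rightarrow> nat \<Rightarrow> complex set" where
  "sector C j = {complex_of_real s * cis \<theta> | s \<theta>. s > 0 \<and> \<bar>\<theta>\<bar> < arcsin (C / real j)}"

end

(* H_t is the Weierstrass transform of alpha along the curve:
   H_t(r, z) = c_t^-1 * integral over Gamma_r of alpha(r, w) exp (-(w - z)^2 / t) dw,
   which is entire in z and jointly continuous.  Since |h'| < 1/2, two points of Gamma_r satisfy
   |Im (w - w0)| <= |Re (w - w0)| / 2, so along the curve the kernel is dominated by the real
   Gaussian exp (-3 (x - x0)^2 / (4 t)).  Uniform continuity of alpha then gives uniform
   approximation on Gamma_r, once the mass of the kernel along the curve is compared with the
   real Gaussian mass; by Cauchy's theorem (a common primitive of the kernel) the two differ only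
   by the contributions of vertical segments at the ends of the support.  Finally, the points of
   omega_1 lying in A_{j,b} are in the sector S_j, so omega_1 inter omega_2 lies in the strip
   Re z < j + 2, |Im z| < C; the support of alpha lies at horizontal distance > 3C/2 + 1 from it,
   which makes Re (w - z)^2 - Im (w - z)^2 >= 1/2 there and H_t = O(sqrt t). *)

theory Submission
  imports Defs "HOL-Complex_Analysis.Complex_Analysis"
begin

section \<open>The Gaussian kernel\<close>

definition gauss_kernel :: "real \<Rightarrow> complex \<Rightarrow> complex" where
  "gauss_kernel t w = exp (- (w\<^sup>2) / of_real t)"

lemma gauss_kernel_of_real: "gauss_kernel t (of_real u) = of_real (exp (- (u\<^sup>2) / t))"
  by (simp add: gauss_kernel_def flip: exp_of_real)

lemma norm_gauss_kernel: "norm (gauss_kernel t w) = exp (- ((Re w)\<^sup>2 - (Im w)\<^sup>2) / t)"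
  by (simp add: gauss_kernel_def Re_divide_of_real power2_eq_square diff_divide_distrib)

lemma norm_gauss_kernel_le:
  assumes "t > 0" "\<bar>Im w\<bar> \<le> \<bar>Re w\<bar> / 2"
  shows "norm (gauss_kernel t w) \<le> exp (- (3/4 * (Re w)\<^sup>2) / t)"
proof -
  have "(Im w)\<^sup>2 \<le> (\<bar>Re w\<bar> / 2)\<^sup>2"
    using assms(2) by (metis abs_ge_zero power2_abs power_mono)
  then have "3/4 * (Re w)\<^sup>2 \<le> (Re w)\<^sup>2 - (Im w)\<^sup>2"
    by (simp add: power_divide)
  then have "- ((Re w)\<^sup>2 - (Im w)\<^sup>2) / t \<le> - (3/4 * (Re w)\<^sup>2) / t"
    using assms(1) by (intro divide_right_mono) auto
  then show ?thesis
    by (simp only: norm_gauss_kernel exp_le_cancel_iff)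
qed

lemma holomorphic_gauss_kernel: "gauss_kernel t holomorphic_on S"
  unfolding gauss_kernel_def[abs_def] by (intro holomorphic_intros) (simp add: divide_inverse)

lemma continuous_on_gauss_kernel [continuous_intros]:
  "continuous_on S f \<Longrightarrow> continuous_on S (\<lambda>x. gauss_kernel t (f x))"
  unfolding gauss_kernel_def divide_inverse by (intro continuous_intros)

lemma gauss_kernel_has_primitive:
  obtains \<Phi> where "\<And>w. (\<Phi> has_field_derivative gauss_kernel t w) (at w)"
  using holomorphic_convex_primitive'[OF convex_UNIV open_UNIV holomorphic_gauss_kernel[where t = t]] by auto

lemma exp_neg_div_le:
  fixes \<kappa> t :: real
  assumes "\<kappa> > 0" "t > 0"
  shows "exp (- \<kappa> / t) \<le> t / \<kappa>"
proof -
  have "\<kappa> / t \<le> exp (\<kappa> / t)"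
    using exp_ge_add_one_self[of "\<kappa> / t"] by linarith
  then have "\<kappa> / t * exp (- \<kappa> / t) \<le> exp (\<kappa> / t) * exp (- \<kappa> / t)"
    by (intro mult_right_mono) auto
  with assms show ?thesis
    by (simp add: field_simps flip: exp_add)
qed

lemma mult_exp_neg_square_le_sqrt:
  fixes t d :: real
  assumes "t > 0" "d \<ge> 0"
  shows "d * exp (- (3/4 * d\<^sup>2) / t) \<le> sqrt t"
proof -
  define y where "y = 3/4 * d\<^sup>2 / t"
  have "0 \<le> (sqrt t - d / 2)\<^sup>2"
    by simp
  then have "sqrt t * d \<le> t + d\<^sup>2 / 4"
    using assms(1) by (simp add: power2_eq_square algebra_simps)
  also have "\<dots> \<le> t * (1 + y)"
    using assms(1) by (simp add: y_def field_simps)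
  also have "\<dots> = sqrt t * (sqrt t * (1 + y))"
    using assms(1) by simp
  finally have "d \<le> sqrt t * (1 + y)"
    using assms(1) by simp
  also have "\<dots> \<le> sqrt t * exp y"
    using assms(1) by (intro mult_left_mono) auto
  finally have "d * exp (- y) \<le> sqrt t * exp y * exp (- y)"
    by (intro mult_right_mono) auto
  also have "\<dots> = sqrt t"
    by (simp add: mult.assoc flip: exp_add)
  finally show ?thesis
    by (simp add: y_def)
qed

lemma gauss_integral_ge:
  fixes t L :: real
  assumes "t > 0" "sqrt t \<le> L"
  shows "sqrt t / 2 \<le> integral {-L..L} (\<lambda>u. exp (- (u\<^sup>2) / t))"
proof -
  have "sqrt t / 2 \<le> integral {-sqrt t..sqrt t} (\<lambda>u. 1/4 :: real)"
    by simp
  also have "\<dots> \<le> integral {-sqrt t..sqrt t} (\<lambda>u. exp (- (u\<^sup>2) / t))"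
  proof (rule integral_le)
    fix u assume "u \<in> {-sqrt t..sqrt t}"
    then have "\<bar>u\<bar> \<le> \<bar>sqrt t\<bar>"
      by auto
    then have "u\<^sup>2 \<le> (sqrt t)\<^sup>2"
      by (simp only: abs_le_square_iff)
    then have "u\<^sup>2 \<le> t"
      using assms(1) by simp
    then have "exp (-1) \<le> exp (- (u\<^sup>2) / t)"
      using assms(1) by simp
    moreover have "1/4 \<le> exp (-1 :: real)"
      using exp_le by (simp add: exp_minus field_simps)
    ultimately show "1/4 \<le> exp (- (u\<^sup>2) / t)"
      by linarith
  qed (use assms in \<open>auto intro!: integrable_continuous_interval continuous_intros\<close>)
  also have "\<dots> \<le> integral {-L..L} (\<lambda>u. exp (- (u\<^sup>2) / t))"
    using assms by (intro integral_subset_le integrable_continuous_interval continuous_intros) auto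
  finally show ?thesis .
qed

lemma gauss_integral_three_quarters_le:
  fixes t L :: real
  assumes "t > 0" "L \<ge> 0"
  shows "integral {-L..L} (\<lambda>u. exp (- (3/4 * u\<^sup>2) / t))
           \<le> 2 * integral {-L..L} (\<lambda>u. exp (- (u\<^sup>2) / t))"
proof -
  define m where "m = sqrt 3 / 2"
  define g where "g = (\<lambda>u. exp (- (u\<^sup>2) / t))"
  have "1 \<le> sqrt (3 :: real)" "sqrt (3 :: real) \<le> 2"
    by (simp_all add: real_le_lsqrt)
  then have m: "0 < m" "m \<le> 1" "m\<^sup>2 = 3/4" "1 / m \<le> 2"
    by (auto simp: m_def power_divide field_simps)
  have "(\<lambda>u. exp (- (3/4 * u\<^sup>2) / t)) = (\<lambda>u. g (m * u))"
    by (simp only: g_def power_mult_distrib m(3))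
  moreover have "(\<lambda>u. u / m) ` {-(m * L)..m * L} = {-L..L}"
    using m by simp
  ultimately have "integral {-L..L} (\<lambda>u. exp (- (3/4 * u\<^sup>2) / t))
      = integral ((\<lambda>u. u / m) ` {-(m * L)..m * L}) (\<lambda>u. g (m * u))"
    by simp
  also have "\<dots> = 1 / m * integral {-(m * L)..m * L} g"
    using integral_stretch_real[where f = g and m = m and a = "-(m * L)" and b = "m * L"] m by simp
  also have "\<dots> \<le> 2 * integral {-L..L} g"
  proof (rule mult_mono)
    have g_int: "g integrable_on {p..q}" for p q
      unfolding g_def using assms(1) by (intro integrable_continuous_interval continuous_intros) auto
    have "{-(m * L)..m * L} \<subseteq> {-L..L}"
      using m assms(2) mult_left_le_one_le[of L m] by auto
    then show "integral {-(m * L)..m * L} g \<le> integral {-L..L} g"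
      by (rule integral_subset_le[OF _ g_int g_int]) (simp add: g_def)
    show "0 \<le> integral {-(m * L)..m * L} g"
      by (rule integral_nonneg[OF g_int]) (simp add: g_def)
  qed (use m in auto)
  finally show ?thesis
    unfolding g_def .
qed

section \<open>Primitives along curves\<close>

lemma integral_shift_real:
  fixes f :: "real \<Rightarrow> 'a::banach"
  shows "integral {a..b} (\<lambda>x. f (x - c)) = integral {a - c..b - c} f"
  using integral_shift_Icc_real[of "a - c" "b - c" "\<lambda>x. f (x - c)" c] by (simp add: o_def)

lemma has_integral_primitive_comp:
  fixes g :: "real \<Rightarrow> complex"
  assumes "a \<le> b"
    and "\<And>w. (\<Phi> has_field_derivative f w) (at w)"
    and "\<And>x. x \<in> {a..b} \<Longrightarrow> (g has_vector_derivative g' x) (at x within {a..b})"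
  shows "((\<lambda>x. g' x * f (g x)) has_integral \<Phi> (g b) - \<Phi> (g a)) {a..b}"
proof -
  have "((\<Phi> \<circ> g) has_vector_derivative g' x * f (g x)) (at x within {a..b})" if "x \<in> {a..b}" for x
    by (rule field_vector_diff_chain_within[OF assms(3)[OF that] has_field_derivative_at_within[OF assms(2)]])
  from fundamental_theorem_of_calculus[OF assms(1) this] show ?thesis
    by (simp add: o_def)
qed

lemma gauss_primitive_vertical_bound:
  assumes "t > 0" and \<Phi>: "\<And>w. (\<Phi> has_field_derivative gauss_kernel t w) (at w)"
    and "Re w1 = x" "Re w2 = x" "\<bar>Im w1\<bar> \<le> \<bar>x\<bar> / 2" "\<bar>Im w2\<bar> \<le> \<bar>x\<bar> / 2"
  shows "norm (\<Phi> w1 - \<Phi> w2) \<le> exp (- (3/4 * x\<^sup>2) / t) * norm (w1 - w2)"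
proof (rule field_differentiable_bound)
  define S where "S = {w. Re w = x \<and> \<bar>Im w\<bar> \<le> \<bar>x\<bar> / 2}"
  have S_eq: "S = {w. Re w \<le> x} \<inter> {w. Re w \<ge> x} \<inter> {w. Im w \<le> \<bar>x\<bar> / 2} \<inter> {w. Im w \<ge> - \<bar>x\<bar> / 2}"
    by (auto simp: S_def)
  show "convex S"
    unfolding S_eq by (intro convex_Int convex_halfspace_Re_le convex_halfspace_Re_ge
        convex_halfspace_Im_le convex_halfspace_Im_ge)
  show "w1 \<in> S" "w2 \<in> S"
    using assms by (auto simp: S_def)
  fix w assume "w \<in> S"
  show "(\<Phi> has_field_derivative gauss_kernel t w) (at w within S)"
    by (rule has_field_derivative_at_within[OF \<Phi>])
  from \<open>w \<in> S\<close> show "norm (gauss_kernel t w) \<le> exp (- (3/4 * x\<^sup>2) / t)"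
    using norm_gauss_kernel_le[OF \<open>t > 0\<close>, of w] by (auto simp: S_def)
qed

lemma continuous_on_compose_pair:
  assumes "continuous_on T (\<lambda>(r, x). g r x)" "continuous_on S \<rho>" "continuous_on S \<xi>"
    and "\<And>q. q \<in> S \<Longrightarrow> (\<rho> q, \<xi> q) \<in> T"
  shows "continuous_on S (\<lambda>q. g (\<rho> q) (\<xi> q))"
proof -
  have "continuous_on S (\<lambda>q. (\<lambda>(r, x). g r x) (\<rho> q, \<xi> q))"
    using assms by (intro continuous_on_compose2[OF assms(1)] continuous_intros) auto
  then show ?thesis
    by simp
qed

section \<open>The sets \<open>\<omega>\<^sub>1\<close> and \<open>\<omega>\<^sub>2\<close>\<close>

lemma abs_arcsin:
  assumes "\<bar>x\<bar> \<le> 1"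
  shows "\<bar>arcsin x\<bar> = arcsin \<bar>x\<bar>"
proof (cases "x \<ge> 0")
  case True
  then show ?thesis
    using arcsin_le_arcsin[of 0 x] assms by simp
next
  case False
  then show ?thesis
    using arcsin_le_arcsin[of x 0] arcsin_minus[of x] assms by simp
qed

lemma in_sector:
  assumes "0 < C" "C \<le> real j" "real j < Re d" "\<bar>Im d\<bar> < C"
  shows "d \<in> sector C j"
proof -
  define s where "s = cmod d"
  define u where "u = Im d / s"
  have j: "real j > 0"
    using assms by linarith
  have s: "s > real j" "s > 0"
    using abs_Re_le_cmod[of d] assms(3) j by (auto simp: s_def)
  have u1: "\<bar>u\<bar> \<le> 1"
    using abs_Im_le_cmod[of d] s by (simp add: u_def s_def abs_div)
  have "\<bar>Im d\<bar> * real j < C * s"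
    using assms s j by (smt (verit) mult_strict_mono mult_left_mono abs_ge_zero)
  then have uC: "\<bar>u\<bar> < C / real j"
    using s j by (simp add: u_def abs_div field_simps)
  have Cj: "C / real j \<le> 1"
    using assms j by simp
  define \<theta> where "\<theta> = arcsin u"
  have "s * cos \<theta> = sqrt (s\<^sup>2 * (1 - u\<^sup>2))"
    using s u1 by (simp add: \<theta>_def cos_arcsin real_sqrt_mult abs_square_le_1)
  also have "s\<^sup>2 * (1 - u\<^sup>2) = s\<^sup>2 - (Im d)\<^sup>2"
    using s by (simp add: u_def power_divide field_simps)
  also have "\<dots> = (Re d)\<^sup>2"
    using cmod_power2[of d] by (simp add: s_def)
  also have "sqrt ((Re d)\<^sup>2) = Re d"
    using assms(3) j by simp
  finally have "s * cos \<theta> = Re d" .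
  moreover have "sin \<theta> = u"
    using u1 unfolding \<theta>_def by (intro sin_arcsin) auto
  then have "s * sin \<theta> = Im d"
    using s by (simp add: u_def)
  ultimately have "d = complex_of_real s * cis \<theta>"
    by (simp add: complex_eq_iff)
  moreover have "\<bar>\<theta>\<bar> < arcsin (C / real j)"
    using arcsin_less_arcsin[of "\<bar>u\<bar>" "C / real j"] u1 uC Cj
    by (simp add: \<theta>_def abs_arcsin)
  ultimately show ?thesis
    unfolding sector_def using s by blast
qed

(* D \<noteq> {} is needed: infdist z {} = 0, so nbhd {} \<delta> = UNIV. *)
lemma nbhd_subset_strip:
  assumes "D \<noteq> {}" "D \<subseteq> {z. Re z < p \<and> \<bar>Im z\<bar> < q}"
  shows "nbhd D \<delta> \<subseteq> {z. Re z < p + \<delta> \<and> \<bar>Im z\<bar> < q + \<delta>}"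
proof
  fix z assume "z \<in> nbhd D \<delta>"
  then have "Inf (dist z ` D) < \<delta>"
    using assms(1) by (simp add: nbhd_def infdist_notempty)
  then obtain d where "d \<in> D" "dist z d < \<delta>"
    using assms(1) cInf_lessD[of "dist z ` D" \<delta>] by blast
  moreover have "\<bar>Re (z - d)\<bar> \<le> dist z d" "\<bar>Im (z - d)\<bar> \<le> dist z d"
    by (simp_all only: dist_norm abs_Re_le_cmod abs_Im_le_cmod)
  ultimately show "z \<in> {z. Re z < p + \<delta> \<and> \<bar>Im z\<bar> < q + \<delta>}"
    using assms(2) by auto
qed

lemma nbhd_omega_subset_strip:
  assumes "0 < C" "C \<le> real j" "real j + 2 \<le> b"
  shows "nbhd ({z. real j + 1 < Re z \<and> cmod z < b \<and> \<bar>Im z\<bar> < C} \<inter>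
                ({z. 0 < Re z \<and> Re z < real j + 2 \<and> \<bar>Im z\<bar> < C} \<union> (ball 0 b - closure (sector C j)))) \<delta>
         \<subseteq> {z. Re z < real j + 2 + \<delta> \<and> \<bar>Im z\<bar> < C + \<delta>}"
    (is "nbhd ?D \<delta> \<subseteq> _")
proof (rule nbhd_subset_strip)
  show "?D \<noteq> {}"
  proof -
    have "Complex (real j + 3/2) 0 \<in> ?D"
      using assms by (simp add: complex_norm)
    then show ?thesis
      by blast
  qed
  show "?D \<subseteq> {z. Re z < real j + 2 \<and> \<bar>Im z\<bar> < C}"
  proof
    fix d assume d: "d \<in> ?D"
    \<comment> \<open>points of \<open>\<omega>\<^sub>1\<close> lie in the sector, so they only meet the strip part of \<open>\<omega>\<^sub>2\<close>\<close>
    then have "d \<in> sector C j"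
      using assms by (intro in_sector) auto
    then have "d \<notin> ball 0 b - closure (sector C j)"
      using closure_subset by blast
    with d show "d \<in> {z. Re z < real j + 2 \<and> \<bar>Im z\<bar> < C}"
      by auto
  qed
qed

section \<open>The Weierstrass transform along a graph\<close>

locale weierstrass_setting =
  fixes B :: "'r::metric_space set"
    and x\<^sub>\<Gamma> lo b C :: real
    and h h' :: "'r \<Rightarrow> real \<Rightarrow> real"
    and \<alpha> :: "'r \<Rightarrow> complex \<Rightarrow> complex"
  assumes compact_B: "compact B"
    and C_pos: "C > 0"
    and lo_bounds: "x\<^sub>\<Gamma> \<le> lo" "lo < b"
    and h_cont: "continuous_on (B \<times> {x\<^sub>\<Gamma>..}) (\<lambda>(r, x). h r x)"
    and h_deriv: "\<And>r x. r \<in> B \<Longrightarrow> x \<ge> x\<^sub>\<Gamma> \<Longrightarrow>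
                    (h r has_real_derivative h' r x) (at x within {x\<^sub>\<Gamma>..})"
    and h'_cont: "continuous_on (B \<times> {x\<^sub>\<Gamma>..}) (\<lambda>(r, x). h' r x)"
    and h_bound: "\<And>r x. r \<in> B \<Longrightarrow> x \<ge> x\<^sub>\<Gamma> \<Longrightarrow> \<bar>h r x\<bar> < C / 2"
    and h'_bound: "\<And>r x. r \<in> B \<Longrightarrow> x \<ge> x\<^sub>\<Gamma> \<Longrightarrow> \<bar>h' r x\<bar> < 1 / 2"
    and \<alpha>_cont: "continuous_on (SIGMA r:B. graph_curve h {x\<^sub>\<Gamma>..} r) (\<lambda>(r, z). \<alpha> r z)"
    and \<alpha>_support: "\<And>r x. r \<in> B \<Longrightarrow> x \<ge> x\<^sub>\<Gamma> \<Longrightarrow> \<alpha> r (Complex x (h r x)) \<noteq> 0 \<Longrightarrow> lo < x \<and> x < b"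
begin

definition curve :: "'r \<Rightarrow> real \<Rightarrow> complex" where
  "curve r x = Complex x (h r x)"

definition curve' :: "'r \<Rightarrow> real \<Rightarrow> complex" where
  "curve' r x = Complex 1 (h' r x)"

(* mass t, the Gaussian mass of [-L, L], is used as normaliser instead of sqrt (pi t);
   L is chosen so that [lo - x, b - x] \<subseteq> [-L, L] for all x \<in> [x\<^sub>\<Gamma>, b + 1]. *)
definition L :: real where
  "L = b - x\<^sub>\<Gamma> + 1"

definition mass :: "real \<Rightarrow> real" where
  "mass t = integral {-L..L} (\<lambda>u. exp (- (u\<^sup>2) / t))"

definition H :: "real \<Rightarrow> 'r \<Rightarrow> complex \<Rightarrow> complex" where
  "H t r z = integral {lo..b} (\<lambda>x. \<alpha> r (curve r x) * curve' r x * gauss_kernel t (curve r x - z))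
               / of_real (mass t)"

lemma Re_curve [simp]: "Re (curve r x) = x"
  and Im_curve [simp]: "Im (curve r x) = h r x"
  by (simp_all add: curve_def)

lemma graph_curve_eq: "graph_curve h {x\<^sub>\<Gamma>..} r = curve r ` {x\<^sub>\<Gamma>..}"
  by (auto simp: graph_curve_def curve_def)

lemma curve_has_vector_derivative:
  assumes "r \<in> B" "x \<in> S" "S \<subseteq> {x\<^sub>\<Gamma>..}"
  shows "(curve r has_vector_derivative curve' r x) (at x within S)"
proof -
  have "(h r has_real_derivative h' r x) (at x within S)"
    using has_field_derivative_subset[OF h_deriv] assms by auto
  then have "((\<lambda>x. of_real x + \<i> * of_real (h r x)) has_vector_derivative of_real 1 + \<i> * of_real (h' r x))
      (at x within S)"
    by (intro has_vector_derivative_add has_vector_derivative_mult_right has_vector_derivative_of_real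
        DERIV_ident)
  moreover have "curve r = (\<lambda>x. of_real x + \<i> * of_real (h r x))" "curve' r x = 1 + \<i> * of_real (h' r x)"
    by (auto simp: curve_def curve'_def complex_eq_iff)
  ultimately show ?thesis
    by simp
qed

lemma norm_curve'_le:
  assumes "r \<in> B" "x \<ge> x\<^sub>\<Gamma>"
  shows "norm (curve' r x) \<le> 3/2"
proof -
  have "norm (curve' r x) \<le> \<bar>Re (curve' r x)\<bar> + \<bar>Im (curve' r x)\<bar>"
    by (rule cmod_le)
  then show ?thesis
    using h'_bound[OF assms] by (simp add: curve'_def)
qed

lemma h_lipschitz:
  assumes "r \<in> B" "x \<ge> x\<^sub>\<Gamma>" "y \<ge> x\<^sub>\<Gamma>"
  shows "\<bar>h r x - h r y\<bar> \<le> \<bar>x - y\<bar> / 2"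
proof -
  have "norm (h r x - h r y) \<le> 1/2 * norm (x - y)"
  proof (rule field_differentiable_bound[of "{x\<^sub>\<Gamma>..}"])
    fix z :: real assume "z \<in> {x\<^sub>\<Gamma>..}"
    then show "(h r has_field_derivative h' r z) (at z within {x\<^sub>\<Gamma>..})" "norm (h' r z) \<le> 1/2"
      using h_deriv[OF assms(1)] h'_bound[OF assms(1)] by (auto simp: less_imp_le)
  qed (use assms in auto)
  then show ?thesis
    by simp
qed

lemma norm_gauss_kernel_curve_le:
  assumes "r \<in> B" "t > 0" "x \<ge> x\<^sub>\<Gamma>" "y \<ge> x\<^sub>\<Gamma>"
  shows "norm (gauss_kernel t (curve r x - curve r y)) \<le> exp (- (3/4 * (x - y)\<^sup>2) / t)"
  using norm_gauss_kernel_le[OF assms(2), of "curve r x - curve r y"] h_lipschitz[OF assms(1,3,4)]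
  by simp

lemma alpha_curve_eq_0:
  assumes "r \<in> B" "x \<ge> x\<^sub>\<Gamma>" "x \<le> lo \<or> b \<le> x"
  shows "\<alpha> r (curve r x) = 0"
  using \<alpha>_support[OF assms(1,2)] assms(3) by (force simp: curve_def)

lemma continuous_on_along_curve:
  assumes "continuous_on S \<rho>" "continuous_on S \<xi>" "\<And>q. q \<in> S \<Longrightarrow> \<rho> q \<in> B \<and> x\<^sub>\<Gamma> \<le> \<xi> q"
  shows "continuous_on S (\<lambda>q. curve (\<rho> q) (\<xi> q))"
    and "continuous_on S (\<lambda>q. curve' (\<rho> q) (\<xi> q))"
    and "continuous_on S (\<lambda>q. \<alpha> (\<rho> q) (curve (\<rho> q) (\<xi> q)))"
proof -
  have h: "continuous_on S (\<lambda>q. h (\<rho> q) (\<xi> q))" and h': "continuous_on S (\<lambda>q. h' (\<rho> q) (\<xi> q))"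
    using assms by (auto intro!: continuous_on_compose_pair[OF h_cont] continuous_on_compose_pair[OF h'_cont])
  show c: "continuous_on S (\<lambda>q. curve (\<rho> q) (\<xi> q))"
    unfolding curve_def Complex_eq using assms(2) h by (intro continuous_intros)
  show "continuous_on S (\<lambda>q. curve' (\<rho> q) (\<xi> q))"
    unfolding curve'_def Complex_eq using h' by (intro continuous_intros)
  show "continuous_on S (\<lambda>q. \<alpha> (\<rho> q) (curve (\<rho> q) (\<xi> q)))"
    using assms c by (intro continuous_on_compose_pair[OF \<alpha>_cont])
      (auto simp: graph_curve_eq)
qed

lemma continuous_on_curve_integrand:
  assumes "continuous_on UNIV \<Psi>" "continuous_on S \<rho>" "continuous_on S \<zeta>" "continuous_on S \<xi>"
    and "\<And>q. q \<in> S \<Longrightarrow> \<rho> q \<in> B \<and> \<xi> q \<in> {lo..b}"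
  shows "continuous_on S (\<lambda>q. \<alpha> (\<rho> q) (curve (\<rho> q) (\<xi> q)) * curve' (\<rho> q) (\<xi> q) *
                                \<Psi> (curve (\<rho> q) (\<xi> q) - \<zeta> q))"
proof -
  have "\<And>q. q \<in> S \<Longrightarrow> \<rho> q \<in> B \<and> x\<^sub>\<Gamma> \<le> \<xi> q"
    using assms(5) lo_bounds by force
  note along = continuous_on_along_curve[OF assms(2,4) this]
  show ?thesis
    using along assms(3) by (intro continuous_intros continuous_on_compose2[OF assms(1)]) auto
qed

lemma H_in_P_class:
  assumes "t > 0"
  shows "H t \<in> P_class B"
proof -
  define k where "k r z = (\<lambda>x. \<alpha> r (curve r x) * curve' r x * gauss_kernel t (curve r x - z))" for r z
  define k' where "k' r z x = \<alpha> r (curve r x) * curve' r x *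
      (\<lambda>w. 2 * w / of_real t * gauss_kernel t w) (curve r x - z)" for r z x
  have kernel_cont: "continuous_on UNIV (gauss_kernel t)" "continuous_on UNIV (\<lambda>w. 2 * w / of_real t * gauss_kernel t w)"
    using assms by (auto intro!: continuous_intros)
  have H_eq: "H t r z = integral (cbox lo b) (k r z) / of_real (mass t)" for r z
    by (simp add: H_def k_def)
  have "continuous_on ((B \<times> UNIV) \<times> cbox lo b) (\<lambda>(p, x). k (fst p) (snd p) x)"
    unfolding k_def case_prod_beta
    by (rule continuous_on_curve_integrand[OF kernel_cont(1)]) (auto intro!: continuous_intros)
  from integral_continuous_on_param[OF this]
  have "continuous_on (B \<times> UNIV) (\<lambda>(r, z). H t r z)"
    unfolding H_eq case_prod_beta divide_inverse by (intro continuous_intros)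
  moreover have "H t r holomorphic_on UNIV" if "r \<in> B" for r
  proof -
    have "(\<lambda>z. integral (cbox lo b) (k r z)) holomorphic_on UNIV"
    proof (rule leibniz_rule_holomorphic)
      fix z x
      show "((\<lambda>z. k r z x) has_field_derivative k' r z x) (at z within UNIV)"
        unfolding k_def k'_def gauss_kernel_def
        using assms by (auto intro!: derivative_eq_intros simp: power2_eq_square field_simps)
      have "continuous_on (cbox lo b) (\<lambda>x. k r z x)"
        unfolding k_def using that
        by (intro continuous_on_curve_integrand[OF kernel_cont(1)] continuous_intros) auto
      then show "k r z integrable_on cbox lo b"
        by (rule integrable_continuous)
    next
      show "continuous_on (UNIV \<times> cbox lo b) (\<lambda>(z, x). k' r z x)"
        unfolding k'_def case_prod_beta using that
        by (intro continuous_on_curve_integrand[OF kernel_cont(2)] continuous_intros) auto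
    qed simp
    then show ?thesis
      unfolding H_eq[abs_def] divide_inverse by (intro holomorphic_intros)
  qed
  ultimately show ?thesis
    unfolding P_class_def by auto
qed

lemma L_ge_1: "L \<ge> 1"
  using lo_bounds by (simp add: L_def)

lemma mass_ge:
  assumes "0 < t" "t \<le> 1"
  shows "sqrt t / 2 \<le> mass t"
proof -
  have "sqrt t \<le> L"
    using assms L_ge_1 real_sqrt_le_1_iff[of t] by linarith
  then show ?thesis
    unfolding mass_def using assms by (intro gauss_integral_ge) auto
qed

lemma mass_pos:
  assumes "0 < t" "t \<le> 1"
  shows "mass t > 0"
  using mass_ge[OF assms] real_sqrt_gt_zero[OF assms(1)] by linarith

lemma gauss_integral_le_mass:
  assumes "t > 0" "x\<^sub>0 \<ge> x\<^sub>\<Gamma>"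
  shows "integral {lo..b} (\<lambda>x. exp (- (3/4 * (x - x\<^sub>0)\<^sup>2) / t)) \<le> 2 * mass t"
proof -
  \<comment> \<open>moving the centre to \<open>x\<^sub>1\<close> only brings it closer to \<open>[lo, b]\<close>\<close>
  define x\<^sub>1 where "x\<^sub>1 = min x\<^sub>0 (b + 1)"
  define g where "g = (\<lambda>u. exp (- (3/4 * u\<^sup>2) / t))"
  have g_int: "g integrable_on {p..q}" for p q
    unfolding g_def using assms(1) by (intro integrable_continuous_interval continuous_intros) auto
  have "integral {lo..b} (\<lambda>x. g (x - x\<^sub>0)) \<le> integral {lo..b} (\<lambda>x. g (x - x\<^sub>1))"
  proof (rule integral_le)
    fix x assume "x \<in> {lo..b}"
    then have "\<bar>x - x\<^sub>1\<bar> \<le> \<bar>x - x\<^sub>0\<bar>"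
      by (auto simp: x\<^sub>1_def)
    then have "(x - x\<^sub>1)\<^sup>2 \<le> (x - x\<^sub>0)\<^sup>2"
      by (simp only: abs_le_square_iff)
    then show "g (x - x\<^sub>0) \<le> g (x - x\<^sub>1)"
      unfolding g_def using assms(1) by (simp add: divide_right_mono)
  qed (use assms(1) in \<open>auto simp: g_def intro!: integrable_continuous_interval continuous_intros\<close>)
  also have "\<dots> = integral {lo - x\<^sub>1..b - x\<^sub>1} g"
    by (rule integral_shift_real)
  also have "\<dots> \<le> integral {-L..L} g"
    using assms lo_bounds by (intro integral_subset_le g_int) (auto simp: x\<^sub>1_def L_def g_def)
  also have "\<dots> \<le> 2 * mass t"
    unfolding g_def mass_def using assms(1) L_ge_1 by (intro gauss_integral_three_quarters_le) auto
  finally show ?thesis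
    by (simp add: g_def)
qed

definition line_mass :: "real \<Rightarrow> real \<Rightarrow> real" where
  "line_mass t x\<^sub>0 = integral {lo..b} (\<lambda>x. exp (- ((x - x\<^sub>0)\<^sup>2) / t))"

definition curve_mass :: "real \<Rightarrow> 'r \<Rightarrow> real \<Rightarrow> complex" where
  "curve_mass t r x\<^sub>0 = integral {lo..b} (\<lambda>x. curve' r x * gauss_kernel t (curve r x - curve r x\<^sub>0))"

lemma line_mass_bounds:
  assumes "t > 0" "lo \<le> x\<^sub>0" "x\<^sub>0 \<le> b"
  shows "0 \<le> line_mass t x\<^sub>0" "line_mass t x\<^sub>0 \<le> mass t"
    and "\<rho> > 0 \<Longrightarrow> lo + \<rho> \<le> x\<^sub>0 \<Longrightarrow> x\<^sub>0 \<le> b - \<rho> \<Longrightarrow> mass t - line_mass t x\<^sub>0 \<le> 2 * L * exp (- \<rho>\<^sup>2 / t)"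
proof -
  define g where "g = (\<lambda>u. exp (- (u\<^sup>2) / t))"
  have g_int: "g integrable_on {p..q}" for p q
    unfolding g_def using assms(1) by (intro integrable_continuous_interval continuous_intros) auto
  have g_nonneg: "0 \<le> integral {p..q} g" for p q
    by (rule integral_nonneg[OF g_int]) (simp add: g_def)
  have line: "line_mass t x\<^sub>0 = integral {lo - x\<^sub>0..b - x\<^sub>0} g"
    unfolding line_mass_def g_def by (rule integral_shift_real)
  have bounds: "-L \<le> lo - x\<^sub>0" "lo - x\<^sub>0 \<le> b - x\<^sub>0" "b - x\<^sub>0 \<le> L"
    using assms lo_bounds by (auto simp: L_def)
  have split: "mass t = integral {-L..lo - x\<^sub>0} g + line_mass t x\<^sub>0 + integral {b - x\<^sub>0..L} g"
    unfolding line mass_def g_def[symmetric] using bounds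
    by (simp add: Henstock_Kurzweil_Integration.integral_combine g_int)
  show "0 \<le> line_mass t x\<^sub>0"
    unfolding line by (rule g_nonneg)
  show "line_mass t x\<^sub>0 \<le> mass t"
    using split g_nonneg[of "-L" "lo - x\<^sub>0"] g_nonneg[of "b - x\<^sub>0" L] by linarith
  assume \<rho>: "\<rho> > 0" "lo + \<rho> \<le> x\<^sub>0" "x\<^sub>0 \<le> b - \<rho>"
  have tail: "integral {p..q} g \<le> L * exp (- \<rho>\<^sup>2 / t)"
    if "p \<le> q" "q - p \<le> L" "\<And>u. u \<in> {p..q} \<Longrightarrow> \<rho> \<le> \<bar>u\<bar>" for p q
  proof -
    have "integral {p..q} g \<le> integral {p..q} (\<lambda>u. exp (- \<rho>\<^sup>2 / t))"
    proof (rule integral_le[OF g_int])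
      fix u assume "u \<in> {p..q}"
      then have "\<rho>\<^sup>2 \<le> u\<^sup>2"
        using that(3) \<rho>(1) by (metis abs_le_square_iff abs_of_pos)
      then show "g u \<le> exp (- \<rho>\<^sup>2 / t)"
        unfolding g_def using assms(1) by (simp add: divide_right_mono)
    qed (rule integrable_const_ivl)
    also have "\<dots> \<le> L * exp (- \<rho>\<^sup>2 / t)"
      using that(1,2) by (simp add: mult_right_mono)
    finally show ?thesis .
  qed
  have "integral {-L..lo - x\<^sub>0} g \<le> L * exp (- \<rho>\<^sup>2 / t)" "integral {b - x\<^sub>0..L} g \<le> L * exp (- \<rho>\<^sup>2 / t)"
    using bounds \<rho> by (intro tail; auto simp: L_def)+
  then show "mass t - line_mass t x\<^sub>0 \<le> 2 * L * exp (- \<rho>\<^sup>2 / t)"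
    using split by linarith
qed

lemma curve_mass_eq_primitive:
  assumes r: "r \<in> B" and \<Phi>: "\<And>w. (\<Phi> has_field_derivative gauss_kernel t w) (at w)"
  shows "curve_mass t r x\<^sub>0 = \<Phi> (curve r b - curve r x\<^sub>0) - \<Phi> (curve r lo - curve r x\<^sub>0)"
proof -
  have "((\<lambda>x. curve r x - curve r x\<^sub>0) has_vector_derivative curve' r x) (at x within {lo..b})"
    if "x \<in> {lo..b}" for x
    using lo_bounds has_vector_derivative_diff[OF curve_has_vector_derivative[OF r that]
        has_vector_derivative_const[of "curve r x\<^sub>0"]] by auto
  then have "((\<lambda>x. curve' r x * gauss_kernel t (curve r x - curve r x\<^sub>0)) has_integral
      \<Phi> (curve r b - curve r x\<^sub>0) - \<Phi> (curve r lo - curve r x\<^sub>0)) {lo..b}"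
    using lo_bounds by (intro has_integral_primitive_comp[OF _ \<Phi>]) auto
  then show ?thesis
    unfolding curve_mass_def by (rule integral_unique)
qed

lemma line_mass_eq_primitive:
  assumes t: "t > 0" and \<Phi>: "\<And>w. (\<Phi> has_field_derivative gauss_kernel t w) (at w)"
  shows "of_real (line_mass t x\<^sub>0) = \<Phi> (of_real (b - x\<^sub>0)) - \<Phi> (of_real (lo - x\<^sub>0))"
proof -
  have "((\<lambda>x. of_real (x - x\<^sub>0) :: complex) has_vector_derivative 1) (at x within {lo..b})" for x
    using has_vector_derivative_of_real[of "\<lambda>x. x - x\<^sub>0" 1] by (auto intro!: derivative_eq_intros)
  then have "((\<lambda>x. 1 * gauss_kernel t (of_real (x - x\<^sub>0))) has_integral
      \<Phi> (of_real (b - x\<^sub>0)) - \<Phi> (of_real (lo - x\<^sub>0))) {lo..b}"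
    using lo_bounds by (intro has_integral_primitive_comp[OF _ \<Phi>]) auto
  then have "((\<lambda>x. of_real (exp (- ((x - x\<^sub>0)\<^sup>2) / t)) :: complex) has_integral
      \<Phi> (of_real (b - x\<^sub>0)) - \<Phi> (of_real (lo - x\<^sub>0))) {lo..b}"
    by (simp only: gauss_kernel_of_real mult.left_neutral)
  moreover have "((\<lambda>x. of_real (exp (- ((x - x\<^sub>0)\<^sup>2) / t)) :: complex)
      has_integral of_real (line_mass t x\<^sub>0)) {lo..b}"
    unfolding line_mass_def using t
    by (intro has_integral_of_real integrable_integral integrable_continuous_interval continuous_intros) auto
  ultimately show ?thesis
    by (rule has_integral_unique[symmetric])
qed

lemma gauss_primitive_curve_vs_line:
  assumes r: "r \<in> B" and t: "t > 0" and \<Phi>: "\<And>w. (\<Phi> has_field_derivative gauss_kernel t w) (at w)"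
    and "a \<ge> x\<^sub>\<Gamma>" "x\<^sub>0 \<ge> x\<^sub>\<Gamma>"
  shows "norm (\<Phi> (curve r a - curve r x\<^sub>0) - \<Phi> (of_real (a - x\<^sub>0)))
           \<le> exp (- (3/4 * (a - x\<^sub>0)\<^sup>2) / t) * \<bar>h r a - h r x\<^sub>0\<bar>"
proof -
  have "\<bar>h r a - h r x\<^sub>0\<bar> \<le> \<bar>a - x\<^sub>0\<bar> / 2"
    using h_lipschitz r assms(4,5) by blast
  then have "norm (\<Phi> (curve r a - curve r x\<^sub>0) - \<Phi> (of_real (a - x\<^sub>0)))
      \<le> exp (- (3/4 * (a - x\<^sub>0)\<^sup>2) / t) * norm ((curve r a - curve r x\<^sub>0) - of_real (a - x\<^sub>0))"
    by (intro gauss_primitive_vertical_bound[OF t \<Phi>]) auto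
  also have "norm ((curve r a - curve r x\<^sub>0) - of_real (a - x\<^sub>0)) = \<bar>h r a - h r x\<^sub>0\<bar>"
    by (simp add: curve_def norm_complex_def)
  finally show ?thesis .
qed

lemma curve_mass_vs_line_mass:
  assumes r: "r \<in> B" and t: "t > 0" and x\<^sub>0: "x\<^sub>0 \<ge> x\<^sub>\<Gamma>"
  shows "norm (curve_mass t r x\<^sub>0 - of_real (line_mass t x\<^sub>0))
         \<le> exp (- (3/4 * (b - x\<^sub>0)\<^sup>2) / t) * \<bar>h r b - h r x\<^sub>0\<bar>
           + exp (- (3/4 * (lo - x\<^sub>0)\<^sup>2) / t) * \<bar>h r lo - h r x\<^sub>0\<bar>"
proof -
  obtain \<Phi> where \<Phi>: "\<And>w. (\<Phi> has_field_derivative gauss_kernel t w) (at w)"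
    using gauss_kernel_has_primitive[where t = t] by blast
  \<comment> \<open>the two masses differ only by the vertical segments at the ends of the curve\<close>
  have "norm (curve_mass t r x\<^sub>0 - of_real (line_mass t x\<^sub>0))
      = norm ((\<Phi> (curve r b - curve r x\<^sub>0) - \<Phi> (of_real (b - x\<^sub>0)))
              - (\<Phi> (curve r lo - curve r x\<^sub>0) - \<Phi> (of_real (lo - x\<^sub>0))))"
    unfolding curve_mass_eq_primitive[OF r \<Phi>] line_mass_eq_primitive[OF t \<Phi>]
    by (simp add: algebra_simps)
  also have "\<dots> \<le> norm (\<Phi> (curve r b - curve r x\<^sub>0) - \<Phi> (of_real (b - x\<^sub>0)))
                 + norm (\<Phi> (curve r lo - curve r x\<^sub>0) - \<Phi> (of_real (lo - x\<^sub>0)))"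
    by (rule norm_triangle_ineq4)
  also have "\<dots> \<le> exp (- (3/4 * (b - x\<^sub>0)\<^sup>2) / t) * \<bar>h r b - h r x\<^sub>0\<bar>
                 + exp (- (3/4 * (lo - x\<^sub>0)\<^sup>2) / t) * \<bar>h r lo - h r x\<^sub>0\<bar>"
    using lo_bounds x\<^sub>0 by (intro add_mono gauss_primitive_curve_vs_line[OF r t \<Phi>]) auto
  finally show ?thesis .
qed

lemma mass_defect_le_endpoints:
  assumes r: "r \<in> B" and t: "t > 0" and x\<^sub>0: "lo \<le> x\<^sub>0" "x\<^sub>0 \<le> b"
  shows "norm (of_real (mass t) - curve_mass t r x\<^sub>0)
         \<le> (mass t - line_mass t x\<^sub>0) + exp (- (3/4 * (b - x\<^sub>0)\<^sup>2) / t) * \<bar>h r b - h r x\<^sub>0\<bar>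
           + exp (- (3/4 * (lo - x\<^sub>0)\<^sup>2) / t) * \<bar>h r lo - h r x\<^sub>0\<bar>"
proof -
  have "norm (of_real (mass t) - curve_mass t r x\<^sub>0)
      \<le> norm (of_real (mass t - line_mass t x\<^sub>0) :: complex) + norm (curve_mass t r x\<^sub>0 - of_real (line_mass t x\<^sub>0))"
    by (rule order_trans[OF _ norm_triangle_ineq4]) simp
  moreover have "x\<^sub>0 \<ge> x\<^sub>\<Gamma>"
    using x\<^sub>0 lo_bounds by simp
  ultimately show ?thesis
    using line_mass_bounds(2)[OF t x\<^sub>0] curve_mass_vs_line_mass[OF r t]
    unfolding norm_of_real by fastforce
qed

lemma mass_defect_le_three_mass:
  assumes r: "r \<in> B" and t: "0 < t" "t \<le> 1" and x\<^sub>0: "lo \<le> x\<^sub>0" "x\<^sub>0 \<le> b"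
  shows "norm (of_real (mass t) - curve_mass t r x\<^sub>0) \<le> 3 * mass t"
proof -
  have end_le: "exp (- (3/4 * (a - x\<^sub>0)\<^sup>2) / t) * \<bar>h r a - h r x\<^sub>0\<bar> \<le> sqrt t / 2" if "a \<ge> x\<^sub>\<Gamma>" for a
  proof -
    have "exp (- (3/4 * (a - x\<^sub>0)\<^sup>2) / t) * \<bar>h r a - h r x\<^sub>0\<bar>
        \<le> exp (- (3/4 * \<bar>a - x\<^sub>0\<bar>\<^sup>2) / t) * (\<bar>a - x\<^sub>0\<bar> / 2)"
      using h_lipschitz[OF r that] x\<^sub>0 lo_bounds by (simp add: mult_left_mono)
    also have "\<dots> \<le> sqrt t / 2"
      using mult_exp_neg_square_le_sqrt[OF t(1), of "\<bar>a - x\<^sub>0\<bar>"] by (simp add: mult.commute)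
    finally show ?thesis .
  qed
  show ?thesis
    using mass_defect_le_endpoints[OF r t(1) x\<^sub>0] end_le[of b] end_le[of lo] lo_bounds
      mass_ge[OF t] line_mass_bounds(1)[OF t(1) x\<^sub>0] by linarith
qed

lemma mass_defect_le_exp:
  assumes r: "r \<in> B" and t: "0 < t" and \<rho>: "\<rho> > 0" "lo + \<rho> \<le> x\<^sub>0" "x\<^sub>0 \<le> b - \<rho>"
  shows "norm (of_real (mass t) - curve_mass t r x\<^sub>0) \<le> (2 * L + 2 * C) * exp (- (3/4 * \<rho>\<^sup>2) / t)"
proof -
  have x\<^sub>0: "lo \<le> x\<^sub>0" "x\<^sub>0 \<le> b" "x\<^sub>0 \<ge> x\<^sub>\<Gamma>"
    using \<rho> lo_bounds by auto
  have "- \<rho>\<^sup>2 / t \<le> - (3/4 * \<rho>\<^sup>2) / t"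
    using t by (intro divide_right_mono) auto
  then have "exp (- \<rho>\<^sup>2 / t) \<le> exp (- (3/4 * \<rho>\<^sup>2) / t)"
    by (simp only: exp_le_cancel_iff)
  then have tail: "mass t - line_mass t x\<^sub>0 \<le> 2 * L * exp (- (3/4 * \<rho>\<^sup>2) / t)"
    using line_mass_bounds(3)[OF t x\<^sub>0(1,2) \<rho>] L_ge_1 by (smt (verit) mult_left_mono)
  have end_le: "exp (- (3/4 * (a - x\<^sub>0)\<^sup>2) / t) * \<bar>h r a - h r x\<^sub>0\<bar> \<le> C * exp (- (3/4 * \<rho>\<^sup>2) / t)"
    if "a \<ge> x\<^sub>\<Gamma>" "\<rho> \<le> \<bar>a - x\<^sub>0\<bar>" for a
  proof -
    have "\<rho>\<^sup>2 \<le> (a - x\<^sub>0)\<^sup>2"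
      using that(2) \<rho>(1) by (metis abs_le_square_iff abs_of_pos)
    then have "exp (- (3/4 * (a - x\<^sub>0)\<^sup>2) / t) \<le> exp (- (3/4 * \<rho>\<^sup>2) / t)"
      using t by (simp add: divide_right_mono)
    moreover have "\<bar>h r a - h r x\<^sub>0\<bar> \<le> C"
      using h_bound[OF r that(1)] h_bound[OF r x\<^sub>0(3)] by linarith
    ultimately show ?thesis
      by (simp add: mult_mono mult.commute)
  qed
  have "exp (- (3/4 * (b - x\<^sub>0)\<^sup>2) / t) * \<bar>h r b - h r x\<^sub>0\<bar> \<le> C * exp (- (3/4 * \<rho>\<^sup>2) / t)"
    "exp (- (3/4 * (lo - x\<^sub>0)\<^sup>2) / t) * \<bar>h r lo - h r x\<^sub>0\<bar> \<le> C * exp (- (3/4 * \<rho>\<^sup>2) / t)"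
    using lo_bounds \<rho> by (intro end_le; simp)+
  with mass_defect_le_endpoints[OF r t x\<^sub>0(1,2)] tail show ?thesis
    by (simp add: algebra_simps)
qed

lemma continuous_on_alpha_curve: "continuous_on (B \<times> {x\<^sub>\<Gamma>..b + 1}) (\<lambda>(r, x). \<alpha> r (curve r x))"
  unfolding case_prod_beta by (rule continuous_on_along_curve(3)) (auto intro!: continuous_intros)

lemma alpha_curve_bounded: "\<exists>M \<ge> 0. \<forall>r\<in>B. \<forall>x\<ge>x\<^sub>\<Gamma>. norm (\<alpha> r (curve r x)) \<le> M"
proof -
  obtain M where "M \<ge> 0" and M: "\<And>p. p \<in> B \<times> {x\<^sub>\<Gamma>..b + 1} \<Longrightarrow> norm ((\<lambda>(r, x). \<alpha> r (curve r x)) p) \<le> M"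
    using continuous_on_compact_bound[OF compact_Times[OF compact_B compact_Icc] continuous_on_alpha_curve]
    by blast
  have "norm (\<alpha> r (curve r x)) \<le> M" if "r \<in> B" "x \<ge> x\<^sub>\<Gamma>" for r x
  proof (cases "x \<le> b + 1")
    case True
    then show ?thesis
      using M[of "(r, x)"] that by auto
  next
    case False
    then show ?thesis
      using alpha_curve_eq_0[OF that] \<open>M \<ge> 0\<close> by simp
  qed
  with \<open>M \<ge> 0\<close> show ?thesis
    by blast
qed

definition continuity_modulus :: "real \<Rightarrow> real \<Rightarrow> bool" where
  "continuity_modulus \<rho> \<eta> \<longleftrightarrow> (\<forall>r\<in>B. \<forall>x\<in>{x\<^sub>\<Gamma>..b + 1}. \<forall>y\<in>{x\<^sub>\<Gamma>..b + 1}.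
     \<bar>x - y\<bar> < \<rho> \<longrightarrow> norm (\<alpha> r (curve r x) - \<alpha> r (curve r y)) \<le> \<eta>)"

lemma continuity_modulusD:
  assumes "continuity_modulus \<rho> \<eta>" "r \<in> B" "x \<in> {x\<^sub>\<Gamma>..b + 1}" "y \<in> {x\<^sub>\<Gamma>..b + 1}" "\<bar>x - y\<bar> < \<rho>"
  shows "norm (\<alpha> r (curve r x) - \<alpha> r (curve r y)) \<le> \<eta>"
  using assms unfolding continuity_modulus_def by blast

lemma exists_continuity_modulus:
  assumes "\<eta> > 0"
  shows "\<exists>\<rho>>0. \<rho> \<le> 1 \<and> continuity_modulus \<rho> \<eta>"
proof -
  have "uniformly_continuous_on (B \<times> {x\<^sub>\<Gamma>..b + 1}) (\<lambda>(r, x). \<alpha> r (curve r x))"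
    by (rule compact_uniformly_continuous[OF continuous_on_alpha_curve compact_Times[OF compact_B compact_Icc]])
  then obtain d where "d > 0" and d: "\<forall>p\<in>B \<times> {x\<^sub>\<Gamma>..b + 1}. \<forall>q\<in>B \<times> {x\<^sub>\<Gamma>..b + 1}.
      dist q p < d \<longrightarrow> dist ((\<lambda>(r, x). \<alpha> r (curve r x)) q) ((\<lambda>(r, x). \<alpha> r (curve r x)) p) < \<eta>"
    using assms unfolding uniformly_continuous_on_def by blast
  have "continuity_modulus (min d 1) \<eta>"
    unfolding continuity_modulus_def
  proof (intro ballI impI)
    fix r x y assume "r \<in> B" "x \<in> {x\<^sub>\<Gamma>..b + 1}" "y \<in> {x\<^sub>\<Gamma>..b + 1}" "\<bar>x - y\<bar> < min d 1"
    then show "norm (\<alpha> r (curve r x) - \<alpha> r (curve r y)) \<le> \<eta>"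
      using d by (fastforce simp: dist_Pair_Pair dist_norm)
  qed
  with \<open>d > 0\<close> show ?thesis
    by (intro exI[of _ "min d 1"]) auto
qed

lemma norm_gauss_kernel_curve_strip_le:
  assumes r: "r \<in> B" and t: "t > 0" and x: "x \<ge> lo"
    and z: "Re z < lo - 3 * C / 2 - 3/4" "\<bar>Im z\<bar> < C + 1/4"
  shows "norm (gauss_kernel t (curve r x - z)) \<le> 2 * t"
proof -
  define w where "w = curve r x - z"
  define p where "p = 3 * C / 2 + 3/4"
  define q where "q = 3 * C / 2 + 1/4"
  have "p < Re w" "\<bar>Im w\<bar> < q"
    using x z h_bound[OF r, of x] lo_bounds by (auto simp: w_def p_def q_def)
  then have "p\<^sup>2 \<le> (Re w)\<^sup>2" "(Im w)\<^sup>2 \<le> q\<^sup>2"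
    using C_pos by (auto simp: p_def intro!: power_mono abs_le_square_iff[THEN iffD1])
  moreover have "p\<^sup>2 - q\<^sup>2 \<ge> 1/2"
    using C_pos by (simp add: p_def q_def power2_eq_square field_simps)
  ultimately have "- ((Re w)\<^sup>2 - (Im w)\<^sup>2) / t \<le> - (1/2) / t"
    using t by (intro divide_right_mono) auto
  then have "norm (gauss_kernel t w) \<le> exp (- (1/2) / t)"
    by (simp only: norm_gauss_kernel exp_le_cancel_iff)
  also have "\<dots> \<le> 2 * t"
    using exp_neg_div_le[of "1/2" t] t by simp
  finally show ?thesis
    by (simp add: w_def)
qed

context
  fixes M :: real
  assumes M_nonneg: "M \<ge> 0"
    and M_bound: "\<And>r x. r \<in> B \<Longrightarrow> x \<ge> x\<^sub>\<Gamma> \<Longrightarrow> norm (\<alpha> r (curve r x)) \<le> M"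
begin

lemma deviation_integrand_le:
  assumes r: "r \<in> B" and t: "t > 0" and x\<^sub>0: "x\<^sub>0 \<ge> x\<^sub>\<Gamma>" and x: "x \<in> {lo..b}"
    and \<rho>: "0 < \<rho>" "\<rho> \<le> 1" and \<eta>: "\<eta> \<ge> 0" and modulus: "continuity_modulus \<rho> \<eta>"
  shows "norm ((\<alpha> r (curve r x) - \<alpha> r (curve r x\<^sub>0)) * (curve' r x * gauss_kernel t (curve r x - curve r x\<^sub>0)))
         \<le> 3/2 * \<eta> * exp (- (3/4 * (x - x\<^sub>0)\<^sup>2) / t) + 3 * M * exp (- (3/4 * \<rho>\<^sup>2) / t)"
proof -
  define E where "E = exp (- (3/4 * (x - x\<^sub>0)\<^sup>2) / t)"
  define k where "k = exp (- (3/4 * \<rho>\<^sup>2) / t)"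
  define \<delta> where "\<delta> = norm (\<alpha> r (curve r x) - \<alpha> r (curve r x\<^sub>0))"
  define g where "g = norm (curve' r x * gauss_kernel t (curve r x - curve r x\<^sub>0))"
  have x_\<Gamma>: "x \<ge> x\<^sub>\<Gamma>"
    using x lo_bounds by auto
  have g: "g \<le> 3/2 * E"
    unfolding g_def norm_mult E_def
    by (intro mult_mono norm_curve'_le norm_gauss_kernel_curve_le r t x\<^sub>0 x_\<Gamma>) auto
  have "0 \<le> g" "0 \<le> \<eta> * E" "0 \<le> M * k"
    using \<eta> M_nonneg by (simp_all add: g_def E_def k_def)
  have "\<delta> * g \<le> 3/2 * \<eta> * E + 3 * M * k"
  proof (cases "\<bar>x - x\<^sub>0\<bar> < \<rho>")
    case True
    moreover have "x \<in> {x\<^sub>\<Gamma>..b + 1}" "x\<^sub>0 \<in> {x\<^sub>\<Gamma>..b + 1}"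
      using x x\<^sub>0 True \<rho> lo_bounds by auto
    ultimately have "\<delta> \<le> \<eta>"
      unfolding \<delta>_def using continuity_modulusD[OF modulus r] by (simp add: abs_minus_commute)
    then have "\<delta> * g \<le> \<eta> * (3/2 * E)"
      using g \<eta> \<open>0 \<le> g\<close> by (intro mult_mono) auto
    then show ?thesis
      using \<open>0 \<le> M * k\<close> by simp
  next
    case False
    then have "\<rho>\<^sup>2 \<le> (x - x\<^sub>0)\<^sup>2"
      using \<rho>(1) by (metis abs_le_square_iff abs_of_pos not_less)
    then have "E \<le> k"
      unfolding E_def k_def using t by (simp add: divide_right_mono)
    moreover have "\<delta> \<le> 2 * M"
      using norm_triangle_ineq4 M_bound[OF r x_\<Gamma>] M_bound[OF r x\<^sub>0] unfolding \<delta>_def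
      by (smt (verit))
    ultimately have "\<delta> * g \<le> 2 * M * (3/2 * k)"
      using g M_nonneg \<open>0 \<le> g\<close> by (intro mult_mono) auto
    then show ?thesis
      using \<open>0 \<le> \<eta> * E\<close> by simp
  qed
  then show ?thesis
    by (simp only: \<delta>_def g_def E_def k_def norm_mult[of "\<alpha> r (curve r x) - \<alpha> r (curve r x\<^sub>0)"])
qed

lemma deviation_integral_le:
  assumes r: "r \<in> B" and t: "t > 0" and x\<^sub>0: "x\<^sub>0 \<ge> x\<^sub>\<Gamma>"
    and \<rho>: "0 < \<rho>" "\<rho> \<le> 1" and \<eta>: "\<eta> \<ge> 0" and modulus: "continuity_modulus \<rho> \<eta>"
  shows "norm (integral {lo..b} (\<lambda>x. (\<alpha> r (curve r x) - \<alpha> r (curve r x\<^sub>0)) *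
                   (curve' r x * gauss_kernel t (curve r x - curve r x\<^sub>0))))
         \<le> 3 * \<eta> * mass t + 3 * M * (b - lo) * exp (- (3/4 * \<rho>\<^sup>2) / t)"
proof -
  define E where "E x = exp (- (3/4 * (x - x\<^sub>0)\<^sup>2) / t)" for x
  define k where "k = exp (- (3/4 * \<rho>\<^sup>2) / t)"
  have E_int: "E integrable_on {lo..b}"
    unfolding E_def using t by (intro integrable_continuous_interval continuous_intros) auto
  have "norm (integral {lo..b} (\<lambda>x. (\<alpha> r (curve r x) - \<alpha> r (curve r x\<^sub>0)) *
                   (curve' r x * gauss_kernel t (curve r x - curve r x\<^sub>0))))
      \<le> integral {lo..b} (\<lambda>x. 3/2 * \<eta> * E x + 3 * M * k)"
  proof (rule integral_norm_bound_integral)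
    show "(\<lambda>x. (\<alpha> r (curve r x) - \<alpha> r (curve r x\<^sub>0)) * (curve' r x * gauss_kernel t (curve r x - curve r x\<^sub>0)))
        integrable_on {lo..b}"
      using r x\<^sub>0 lo_bounds
      by (intro integrable_continuous_interval continuous_intros continuous_on_along_curve) auto
    show "(\<lambda>x. 3/2 * \<eta> * E x + 3 * M * k) integrable_on {lo..b}"
      using E_int by (intro integrable_add integrable_on_mult_right) auto
  qed (unfold E_def k_def, rule deviation_integrand_le[OF r t x\<^sub>0 _ \<rho> \<eta> modulus])
  also have "\<dots> = integral {lo..b} (\<lambda>x. 3/2 * \<eta> * E x) + integral {lo..b} (\<lambda>x. 3 * M * k)"
    by (intro integral_add integrable_on_mult_right E_int integrable_const_ivl)
  also have "\<dots> = 3/2 * \<eta> * integral {lo..b} E + 3 * M * k * (b - lo)"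
    using lo_bounds by simp
  also have "\<dots> \<le> 3/2 * \<eta> * (2 * mass t) + 3 * M * k * (b - lo)"
    using gauss_integral_le_mass[OF t x\<^sub>0] \<eta> unfolding E_def by (intro add_right_mono mult_left_mono) auto
  finally show ?thesis
    by (simp add: k_def algebra_simps)
qed

lemma alpha_times_mass_defect_le:
  assumes r: "r \<in> B" and t: "0 < t" "t \<le> 1" and x\<^sub>0: "x\<^sub>0 \<ge> x\<^sub>\<Gamma>"
    and \<rho>: "0 < \<rho>" "\<rho> \<le> 1" and \<eta>: "\<eta> \<ge> 0" and modulus: "continuity_modulus \<rho> \<eta>"
  shows "norm (\<alpha> r (curve r x\<^sub>0)) * norm (of_real (mass t) - curve_mass t r x\<^sub>0)
         \<le> 3 * \<eta> * mass t + M * (2 * L + 2 * C) * exp (- (3/4 * \<rho>\<^sup>2) / t)"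
proof -
  define k where "k = exp (- (3/4 * \<rho>\<^sup>2) / t)"
  have nonneg: "0 \<le> 3 * \<eta> * mass t" "0 \<le> M * (2 * L + 2 * C) * k"
    using \<eta> mass_pos[OF t] M_nonneg L_ge_1 C_pos by (auto simp: k_def intro!: mult_nonneg_nonneg)
  show ?thesis
  proof (cases "\<alpha> r (curve r x\<^sub>0) = 0")
    case True
    then show ?thesis
      using nonneg by (simp add: k_def)
  next
    case False
    then have x\<^sub>0_in: "lo < x\<^sub>0" "x\<^sub>0 < b"
      using alpha_curve_eq_0[OF r x\<^sub>0] by force+
    \<comment> \<open>near an end of the support \<open>\<alpha>\<close> is small, elsewhere the mass defect is\<close>
    show ?thesis
    proof (cases "x\<^sub>0 - lo < \<rho> \<or> b - x\<^sub>0 < \<rho>")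
      case True
      define a where "a = (if x\<^sub>0 - lo < \<rho> then lo else b)"
      have "a \<in> {lo, b}" "\<bar>x\<^sub>0 - a\<bar> < \<rho>"
        using True x\<^sub>0_in by (auto simp: a_def)
      moreover from this have "\<alpha> r (curve r a) = 0"
        using lo_bounds by (intro alpha_curve_eq_0[OF r]) auto
      moreover have "x\<^sub>0 \<in> {x\<^sub>\<Gamma>..b + 1}" "a \<in> {x\<^sub>\<Gamma>..b + 1}"
        using x\<^sub>0 x\<^sub>0_in \<open>a \<in> {lo, b}\<close> lo_bounds by auto
      ultimately have "norm (\<alpha> r (curve r x\<^sub>0)) \<le> \<eta>"
        using continuity_modulusD[OF modulus r] by force
      then have "norm (\<alpha> r (curve r x\<^sub>0)) * norm (of_real (mass t) - curve_mass t r x\<^sub>0) \<le> \<eta> * (3 * mass t)"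
        using mass_defect_le_three_mass[OF r t] x\<^sub>0_in \<eta> by (intro mult_mono) auto
      then show ?thesis
        using nonneg by (simp add: k_def)
    next
      case False
      then have "norm (of_real (mass t) - curve_mass t r x\<^sub>0) \<le> (2 * L + 2 * C) * k"
        using mass_defect_le_exp[OF r t(1) \<rho>(1)] x\<^sub>0_in by (simp add: k_def)
      then have "norm (\<alpha> r (curve r x\<^sub>0)) * norm (of_real (mass t) - curve_mass t r x\<^sub>0) \<le> M * ((2 * L + 2 * C) * k)"
        using M_bound[OF r x\<^sub>0] M_nonneg by (intro mult_mono) auto
      then show ?thesis
        using nonneg by (simp add: k_def mult.assoc)
    qed
  qed
qed

lemma H_on_curve_decomposition:
  assumes r: "r \<in> B" and t: "mass t \<noteq> 0"
  shows "of_real (mass t) * (\<alpha> r (curve r x\<^sub>0) - H t r (curve r x\<^sub>0))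
         = \<alpha> r (curve r x\<^sub>0) * (of_real (mass t) - curve_mass t r x\<^sub>0)
           - integral {lo..b} (\<lambda>x. (\<alpha> r (curve r x) - \<alpha> r (curve r x\<^sub>0)) *
                (curve' r x * gauss_kernel t (curve r x - curve r x\<^sub>0)))"
proof -
  define f where "f x = \<alpha> r (curve r x)" for x
  define G where "G x = curve' r x * gauss_kernel t (curve r x - curve r x\<^sub>0)" for x
  have cont: "continuous_on {lo..b} f" "continuous_on {lo..b} G"
    unfolding f_def G_def using r lo_bounds
    by (auto intro!: continuous_intros continuous_on_along_curve)
  define A where "A = integral {lo..b} (\<lambda>x. (f x - f x\<^sub>0) * G x)"
  have "A = integral {lo..b} (\<lambda>x. f x * G x) - f x\<^sub>0 * curve_mass t r x\<^sub>0"
    using cont unfolding A_def curve_mass_def G_def[symmetric] left_diff_distrib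
    by (simp add: integral_diff integrable_continuous_interval continuous_intros integral_mult_right)
  moreover have "integral {lo..b} (\<lambda>x. f x * G x) = of_real (mass t) * H t r (curve r x\<^sub>0)"
    using t by (simp add: H_def f_def G_def mult.assoc)
  ultimately show ?thesis
    unfolding f_def[symmetric] G_def[symmetric] A_def[symmetric] by (simp add: algebra_simps)
qed

lemma approximation_error_le:
  assumes r: "r \<in> B" and t: "0 < t" "t \<le> 1" and x\<^sub>0: "x\<^sub>0 \<ge> x\<^sub>\<Gamma>"
    and \<rho>: "0 < \<rho>" "\<rho> \<le> 1" and \<eta>: "\<eta> \<ge> 0" and modulus: "continuity_modulus \<rho> \<eta>"
  shows "norm (\<alpha> r (curve r x\<^sub>0) - H t r (curve r x\<^sub>0))
         \<le> 6 * \<eta> + 2 * (M * (3 * (b - lo) + 2 * L + 2 * C)) * sqrt t / (3/4 * \<rho>\<^sup>2)"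
proof -
  define Q where "Q = M * (3 * (b - lo) + 2 * L + 2 * C)"
  define \<kappa> where "\<kappa> = 3/4 * \<rho>\<^sup>2"
  have \<kappa>: "\<kappa> > 0"
    using \<rho> by (simp add: \<kappa>_def)
  have Q: "Q \<ge> 0"
    using M_nonneg lo_bounds L_ge_1 C_pos by (simp add: Q_def)
  have c: "mass t > 0" "sqrt t / 2 \<le> mass t"
    using mass_pos[OF t] mass_ge[OF t] by auto
  have "mass t * norm (\<alpha> r (curve r x\<^sub>0) - H t r (curve r x\<^sub>0))
      = norm (of_real (mass t) * (\<alpha> r (curve r x\<^sub>0) - H t r (curve r x\<^sub>0)))"
    using c by (simp add: norm_mult)
  also have "\<dots> \<le> norm (\<alpha> r (curve r x\<^sub>0)) * norm (of_real (mass t) - curve_mass t r x\<^sub>0)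
      + norm (integral {lo..b} (\<lambda>x. (\<alpha> r (curve r x) - \<alpha> r (curve r x\<^sub>0)) *
                (curve' r x * gauss_kernel t (curve r x - curve r x\<^sub>0))))"
    unfolding H_on_curve_decomposition[OF r c(1)[THEN less_imp_neq, symmetric]]
    by (rule order_trans[OF norm_triangle_ineq4]) (simp add: norm_mult)
  also have "\<dots> \<le> 6 * \<eta> * mass t + Q * exp (- \<kappa> / t)"
    using alpha_times_mass_defect_le[OF r t x\<^sub>0 \<rho> \<eta> modulus] deviation_integral_le[OF r t(1) x\<^sub>0 \<rho> \<eta> modulus]
    by (simp add: Q_def \<kappa>_def algebra_simps)
  finally have "norm (\<alpha> r (curve r x\<^sub>0) - H t r (curve r x\<^sub>0)) \<le> 6 * \<eta> + Q * exp (- \<kappa> / t) / mass t"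
    using c by (simp add: field_simps)
  also have "Q * exp (- \<kappa> / t) / mass t \<le> Q * (t / \<kappa>) / (sqrt t / 2)"
    using exp_neg_div_le[OF \<kappa> t(1)] c Q t \<kappa>
    by (intro frac_le mult_left_mono) auto
  also have "Q * (t / \<kappa>) / (sqrt t / 2) = 2 * Q * (t / sqrt t) / \<kappa>"
    using t by (simp add: field_simps)
  also have "t / sqrt t = sqrt t"
    using t by (simp add: real_div_sqrt)
  finally show ?thesis
    by (simp add: Q_def \<kappa>_def)
qed

lemma H_approximates_alpha:
  assumes "\<epsilon> > 0"
  shows "\<exists>t\<^sub>0>0. \<forall>r\<in>B. \<forall>t. 0 < t \<and> t < t\<^sub>0 \<longrightarrow>
           (\<forall>z\<in>graph_curve h {x\<^sub>\<Gamma>..} r. norm (\<alpha> r z - H t r z) \<le> \<epsilon>)"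
proof -
  obtain \<rho> where \<rho>: "0 < \<rho>" "\<rho> \<le> 1" and modulus: "continuity_modulus \<rho> (\<epsilon> / 12)"
    using exists_continuity_modulus[of "\<epsilon> / 12"] assms by auto
  define Q where "Q = M * (3 * (b - lo) + 2 * L + 2 * C)"
  define \<kappa> where "\<kappa> = 3/4 * \<rho>\<^sup>2"
  have "\<kappa> > 0" "Q \<ge> 0"
    using \<rho> M_nonneg lo_bounds L_ge_1 C_pos by (simp_all add: \<kappa>_def Q_def)
  define t\<^sub>0 where "t\<^sub>0 = min 1 ((\<epsilon> * \<kappa> / (4 * (Q + 1)))\<^sup>2)"
  have "t\<^sub>0 > 0"
    using assms \<open>\<kappa> > 0\<close> \<open>Q \<ge> 0\<close> by (simp add: t\<^sub>0_def)
  moreover have "norm (\<alpha> r z - H t r z) \<le> \<epsilon>"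
    if r: "r \<in> B" and t: "0 < t" "t < t\<^sub>0" and z: "z \<in> graph_curve h {x\<^sub>\<Gamma>..} r" for r t z
  proof -
    obtain x\<^sub>0 where x\<^sub>0: "x\<^sub>0 \<ge> x\<^sub>\<Gamma>" "z = curve r x\<^sub>0"
      using z by (auto simp: graph_curve_eq)
    have "t \<le> 1" "sqrt t < \<epsilon> * \<kappa> / (4 * (Q + 1))"
      using t assms \<open>\<kappa> > 0\<close> \<open>Q \<ge> 0\<close> by (auto simp: t\<^sub>0_def real_less_lsqrt)
    then have "2 * Q * sqrt t / \<kappa> \<le> \<epsilon> / 2"
      using \<open>\<kappa> > 0\<close> \<open>Q \<ge> 0\<close> t by (simp add: field_simps) (smt (verit) mult_right_mono real_sqrt_ge_zero)
    moreover have "norm (\<alpha> r z - H t r z) \<le> 6 * (\<epsilon> / 12) + 2 * Q * sqrt t / \<kappa>"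
      unfolding x\<^sub>0(2) Q_def \<kappa>_def
      using assms by (intro approximation_error_le[OF r t(1) \<open>t \<le> 1\<close> x\<^sub>0(1) \<rho> _ modulus]) auto
    ultimately show ?thesis
      by simp
  qed
  ultimately show ?thesis
    by blast
qed

lemma norm_H_le:
  assumes r: "r \<in> B" and t: "0 < t" "t \<le> 1"
    and z: "Re z < lo - 3 * C / 2 - 3/4" "\<bar>Im z\<bar> < C + 1/4"
  shows "norm (H t r z) \<le> 6 * M * (b - lo) * sqrt t"
proof -
  have "norm (integral {lo..b} (\<lambda>x. \<alpha> r (curve r x) * curve' r x * gauss_kernel t (curve r x - z)))
      \<le> integral {lo..b} (\<lambda>x. M * (3/2) * (2 * t))"
  proof (rule integral_norm_bound_integral)
    show "(\<lambda>x. \<alpha> r (curve r x) * curve' r x * gauss_kernel t (curve r x - z)) integrable_on {lo..b}"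
      using r lo_bounds by (intro integrable_continuous_interval continuous_intros continuous_on_along_curve) auto
    fix x assume x: "x \<in> {lo..b}"
    then have "x \<ge> x\<^sub>\<Gamma>"
      using lo_bounds by auto
    then show "norm (\<alpha> r (curve r x) * curve' r x * gauss_kernel t (curve r x - z)) \<le> M * (3/2) * (2 * t)"
      unfolding norm_mult using M_bound[OF r] norm_curve'_le[OF r] M_nonneg
        norm_gauss_kernel_curve_strip_le[OF r t(1) _ z] x
      by (intro mult_mono) auto
  qed (rule integrable_const_ivl)
  also have "\<dots> = 3 * M * (b - lo) * t"
    using lo_bounds by simp
  finally have "norm (H t r z) \<le> 3 * M * (b - lo) * t / mass t"
    using mass_pos[OF t] by (simp add: H_def norm_divide divide_right_mono)
  also have "\<dots> \<le> 3 * M * (b - lo) * t / (sqrt t / 2)"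
    using mass_ge[OF t] M_nonneg lo_bounds t by (intro frac_le) auto
  also have "\<dots> = 6 * M * (b - lo) * (t / sqrt t)"
    by simp
  also have "t / sqrt t = sqrt t"
    using t by (simp add: real_div_sqrt)
  finally show ?thesis .
qed

lemma H_uniform_limit_zero:
  "uniform_limit (B \<times> {z. Re z < lo - 3 * C / 2 - 3/4 \<and> \<bar>Im z\<bar> < C + 1/4})
     (\<lambda>t (r, z). H t r z) (\<lambda>_. 0) (at_right 0)"
proof (rule uniform_limit_null_comparison)
  define K where "K = 6 * M * (b - lo)"
  show "\<forall>\<^sub>F t in at_right 0. \<forall>p\<in>B \<times> {z. Re z < lo - 3 * C / 2 - 3/4 \<and> \<bar>Im z\<bar> < C + 1/4}.
      norm ((\<lambda>(r, z). H t r z) p) \<le> K * sqrt t"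
    unfolding eventually_at_right_field K_def
    by (rule exI[of _ 1]) (auto intro!: norm_H_le)
  have "((\<lambda>t. K * sqrt t) \<longlongrightarrow> 0) (at_right 0)"
    by (auto intro!: tendsto_eq_intros)
  then show "uniform_limit (B \<times> {z. Re z < lo - 3 * C / 2 - 3/4 \<and> \<bar>Im z\<bar> < C + 1/4})
      (\<lambda>t _. K * sqrt t) (\<lambda>_. 0) (at_right 0)"
    by (simp add: uniform_limit_iff tendsto_iff)
qed

end

end

lemma graph_support_bound:
  assumes "closure {z \<in> graph_curve h \<Gamma> r. \<alpha> r z \<noteq> 0}
             \<subseteq> {z \<in> graph_curve h \<Gamma> r. a < Re z \<and> cmod z < b \<and> P z}"
    and "x \<in> \<Gamma>" "\<alpha> r (Complex x (h r x)) \<noteq> 0"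
  shows "a < x \<and> x < b"
proof -
  have "Complex x (h r x) \<in> closure {z \<in> graph_curve h \<Gamma> r. \<alpha> r z \<noteq> 0}"
    using assms(2,3) closure_subset by (fastforce simp: graph_curve_def)
  then have "a < x" "cmod (Complex x (h r x)) < b"
    using assms(1) by auto
  moreover have "x \<le> cmod (Complex x (h r x))"
    using complex_Re_le_cmod[of "Complex x (h r x)"] by simp
  ultimately show ?thesis
    by linarith
qed

theorem lemma3p4:
  fixes R C b :: real and j :: nat
    and B :: "(real ^ 'm) set"
    and h h' :: "real ^ 'm \<Rightarrow> real \<Rightarrow> real"
    and \<alpha> :: "real ^ 'm \<Rightarrow> complex \<Rightarrow> complex"
  assumes R: "R > 1" and Cpos: "C > 0"
    and B: "compact B"
    and h_cont: "continuous_on (B \<times> {R - 1..}) (\<lambda>(r, x). h r x)"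
    and h_deriv: "\<forall>r\<in>B. \<forall>x\<in>{R - 1..}. (h r has_real_derivative h' r x) (at x within {R - 1..})"
    and h'_cont: "continuous_on (B \<times> {R - 1..}) (\<lambda>(r, x). h' r x)"
    and h_bd: "\<forall>r\<in>B. \<forall>x\<in>{R - 1..}. \<bar>h r x\<bar> < C / 2"
    and h'_bd: "\<forall>r\<in>B. \<forall>x\<in>{R - 1..}. \<bar>h' r x\<bar> < 1 / 2"
    and jR: "real j \<ge> R" and jC: "real j \<ge> C"
    and b: "b > real j + 3 + 3 * C / 2"
    and \<alpha>_cont: "continuous_on (SIGMA r:B. graph_curve h {R - 1..} r) (\<lambda>(r, z). \<alpha> r z)"
    and \<alpha>_cpt: "\<forall>r\<in>B. compact (closure {z \<in> graph_curve h {R - 1..} r. \<alpha> r z \<noteq> 0})"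
    and \<alpha>_supp: "\<forall>r\<in>B. closure {z \<in> graph_curve h {R - 1..} r. \<alpha> r z \<noteq> 0}
        \<subseteq> {z \<in> graph_curve h {R - 1..} r. real j + 3 + 3 * C / 2 < Re z \<and> cmod z < b \<and> \<bar>Im z\<bar> < C / 2}"
  shows "\<forall>\<epsilon>>0. \<exists>H :: real \<Rightarrow> real ^ 'm \<Rightarrow> complex \<Rightarrow> complex. \<exists>t0>0.
           (\<forall>t>0. H t \<in> P_class B) \<and>
           (\<forall>r\<in>B. \<forall>t. 0 < t \<and> t < t0 \<longrightarrow>
               (\<exists>M<\<epsilon>. \<forall>z\<in>graph_curve h {R - 1..} r. cmod (\<alpha> r z - H t r z) \<le> M)) \<and>
           (\<exists>\<delta>>0. uniform_limit (B \<times> nbhd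
                 ({z. real j + 1 < Re z \<and> cmod z < b \<and> \<bar>Im z\<bar> < C} \<inter>
                  ({z. 0 < Re z \<and> Re z < real j + 2 \<and> \<bar>Im z\<bar> < C} \<union> (ball 0 b - closure (sector C j)))) \<delta>)
               (\<lambda>t (r, z). H t r z) (\<lambda>_. 0) (at_right 0))"
proof -
  have "real j + 3 + 3 * C / 2 < x \<and> x < b"
    if "r \<in> B" "x \<ge> R - 1" "\<alpha> r (Complex x (h r x)) \<noteq> 0" for r x
    using that by (intro graph_support_bound[OF bspec[OF \<alpha>_supp]]) auto
  then interpret W: weierstrass_setting B "R - 1" "real j + 3 + 3 * C / 2" b C h h' \<alpha>
    using B Cpos jR b h_cont h_deriv h'_cont h_bd h'_bd \<alpha>_cont by unfold_locales auto
  obtain M where M: "M \<ge> 0" "\<And>r x. r \<in> B \<Longrightarrow> x \<ge> R - 1 \<Longrightarrow> cmod (\<alpha> r (W.curve r x)) \<le> M"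
    using W.alpha_curve_bounded by blast
  show ?thesis (is "\<forall>\<epsilon>>0. \<exists>H. \<exists>t\<^sub>0>0. ?P H \<and> ?Q \<epsilon> H t\<^sub>0 \<and> ?L H")
  proof (intro allI impI)
    have P: "?P W.H"
      using W.H_in_P_class by blast
    have L: "?L W.H"
      using nbhd_omega_subset_strip[OF Cpos jC, of b "1/4"] b Cpos
      by (intro exI[of _ "1/4 :: real"] conjI uniform_limit_on_subset[OF W.H_uniform_limit_zero[OF M]]
          Sigma_mono) auto
    fix \<epsilon> :: real assume "\<epsilon> > 0"
    then obtain t\<^sub>0 where "t\<^sub>0 > 0" and t\<^sub>0: "\<forall>r\<in>B. \<forall>t. 0 < t \<and> t < t\<^sub>0 \<longrightarrow>
        (\<forall>z\<in>graph_curve h {R - 1..} r. cmod (\<alpha> r z - W.H t r z) \<le> \<epsilon> / 2)"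
      using W.H_approximates_alpha[OF M, of "\<epsilon> / 2"] by auto
    have Q: "?Q \<epsilon> W.H t\<^sub>0"
      using t\<^sub>0 \<open>\<epsilon> > 0\<close> by (intro ballI allI impI exI[of _ "\<epsilon> / 2"]) auto
    show "\<exists>H. \<exists>t\<^sub>0>0. ?P H \<and> ?Q \<epsilon> H t\<^sub>0 \<and> ?L H"
      by (rule exI[of _ W.H], rule exI[of _ t\<^sub>0], intro conjI) (fact \<open>t\<^sub>0 > 0\<close> P Q L)+
  qed
qed

end
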